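(* Let $G$ be a finite simple connected graph containing no cycle of length $3$ and no cycle of length $5$ as a subgraph. Suppose $\kappa>0$ is a real number such that $\kappa_{LLY}(x,y)\ge \kappa$ for every edge $xy$ of $G$. Then $$|V(G)|\le 2^{2/\kappa}.$$ Moreover, equality holds if and only if $G$ is isomorphic to the hypercube $Q_d$ and $\kappa=\frac{2}{d}$ for some positive integer $d$.
   Context: For vertices $u,v$ of a connected graph $G$, $d(u,v)$ is the graph distance, $N(v)$ is the neighborhood of $v$ and $d_v=|N(v)|$ its degree. For $0\le\alpha<1$ and a vertex $x$, the $\alpha$-lazy random walk is the probability distribution $m_x^\alpha$ on $V(G)$ with $m_x^\alpha(x)=\alpha$, $m_x^\alpha(v)=(1-\alpha)/d_x$ for $v\in N(x)$, and $m_x^\alpha(v)=0$ otherwise. For probability distributions $m_1,m_2$ on $V(G)$, a coupling is a map $A:V\times V\to[0,1]$ with $\sum_y A(x,y)=m_1(x)$ and $\sum_x A(x,y)=m_2(y)$, and the transportation distance is $W(m_1,m_2)=\inf_A\sum_{x,y}A(x,y)d(x,y)$ over all couplings $A$. For distinct vertices $x,y$, $\kappa_\alpha(x,y)=1-\frac{W(m_x^\alpha,m_y^\alpha)}{d(x,y)}$, and the Lin–Lu–Yau Ricci curvature is $\kappa_{LLY}(x,y)=\lim_{\alpha\to1}\frac{\kappa_\alpha(x,y)}{1-\alpha}$. The hypercube $Q_d$ is the graph on the subsets of $\{1,\dots,d\}$ in which two subsets are adjacent iff their symmetric difference has exactly one element. *)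

theory Defs
  imports Complex_Main
begin

definition simple_graph :: "'a set \<Rightarrow> ('a \<Rightarrow> 'a \<Rightarrow> bool) \<Rightarrow> bool" where
  "simple_graph V E \<longleftrightarrow> finite V \<and> (\<forall>x y. E x y \<longrightarrow> x \<in> V \<and> y \<in> V)
     \<and> (\<forall>x y. E x y \<longrightarrow> E y x) \<and> (\<forall>x. \<not> E x x)"

definition is_walk :: "('a \<Rightarrow> 'a \<Rightarrow> bool) \<Rightarrow> 'a \<Rightarrow> 'a \<Rightarrow> nat \<Rightarrow> 'a list \<Rightarrow> bool" where
  "is_walk E u v n xs \<longleftrightarrow> length xs = Suc n \<and> hd xs = u \<and> last xs = v
     \<and> (\<forall>i<n. E (xs ! i) (xs ! Suc i))"

definition connected_graph :: "'a set \<Rightarrow> ('a \<Rightarrow> 'a \<Rightarrow> bool) \<Rightarrow> bool" where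
  "connected_graph V E \<longleftrightarrow> V \<noteq> {} \<and> (\<forall>u\<in>V. \<forall>v\<in>V. \<exists>n xs. is_walk E u v n xs)"

definition gdist :: "('a \<Rightarrow> 'a \<Rightarrow> bool) \<Rightarrow> 'a \<Rightarrow> 'a \<Rightarrow> nat" where
  "gdist E u v = (LEAST n. \<exists>xs. is_walk E u v n xs)"

definition degree :: "'a set \<Rightarrow> ('a \<Rightarrow> 'a \<Rightarrow> bool) \<Rightarrow> 'a \<Rightarrow> nat" where
  "degree V E x = card {y \<in> V. E x y}"

definition lazy_rw :: "'a set \<Rightarrow> ('a \<Rightarrow> 'a \<Rightarrow> bool) \<Rightarrow> real \<Rightarrow> 'a \<Rightarrow> 'a \<Rightarrow> real" where
  "lazy_rw V E \<alpha> x v = (if v = x then \<alpha> else if E x v then (1 - \<alpha>) / real (degree V E x) else 0)"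

definition coupling :: "'a set \<Rightarrow> ('a \<Rightarrow> real) \<Rightarrow> ('a \<Rightarrow> real) \<Rightarrow> ('a \<Rightarrow> 'a \<Rightarrow> real) \<Rightarrow> bool" where
  "coupling V m1 m2 A \<longleftrightarrow> (\<forall>x\<in>V. \<forall>y\<in>V. 0 \<le> A x y \<and> A x y \<le> 1)
     \<and> (\<forall>x\<in>V. (\<Sum>y\<in>V. A x y) = m1 x) \<and> (\<forall>y\<in>V. (\<Sum>x\<in>V. A x y) = m2 y)"

definition transport :: "'a set \<Rightarrow> ('a \<Rightarrow> 'a \<Rightarrow> bool) \<Rightarrow> ('a \<Rightarrow> real) \<Rightarrow> ('a \<Rightarrow> real) \<Rightarrow> real" where
  "transport V E m1 m2 = Inf {(\<Sum>x\<in>V. \<Sum>y\<in>V. A x y * real (gdist E x y)) | A. coupling V m1 m2 A}"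

definition kappa_alpha :: "'a set \<Rightarrow> ('a \<Rightarrow> 'a \<Rightarrow> bool) \<Rightarrow> real \<Rightarrow> 'a \<Rightarrow> 'a \<Rightarrow> real" where
  "kappa_alpha V E \<alpha> x y = 1 - transport V E (lazy_rw V E \<alpha> x) (lazy_rw V E \<alpha> y) / real (gdist E x y)"

definition kappa_LLY :: "'a set \<Rightarrow> ('a \<Rightarrow> 'a \<Rightarrow> bool) \<Rightarrow> 'a \<Rightarrow> 'a \<Rightarrow> real" where
  "kappa_LLY V E x y = Lim (at_left 1) (\<lambda>\<alpha>. kappa_alpha V E \<alpha> x y / (1 - \<alpha>))"

definition no_C3 :: "('a \<Rightarrow> 'a \<Rightarrow> bool) \<Rightarrow> bool" where
  "no_C3 E \<longleftrightarrow> \<not> (\<exists>a b c. distinct [a, b, c] \<and> E a b \<and> E b c \<and> E c a)"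

definition no_C5 :: "('a \<Rightarrow> 'a \<Rightarrow> bool) \<Rightarrow> bool" where
  "no_C5 E \<longleftrightarrow> \<not> (\<exists>a b c d e. distinct [a, b, c, d, e]
      \<and> E a b \<and> E b c \<and> E c d \<and> E d e \<and> E e a)"

text \<open>Hypercube Q_d: vertices are subsets of {1..d}, adjacent iff symmetric difference has one element.\<close>
definition hypercube_adj :: "nat set \<Rightarrow> nat set \<Rightarrow> bool" where
  "hypercube_adj A B \<longleftrightarrow> card ((A - B) \<union> (B - A)) = 1"

definition iso_hypercube :: "'a set \<Rightarrow> ('a \<Rightarrow> 'a \<Rightarrow> bool) \<Rightarrow> nat \<Rightarrow> bool" where
  "iso_hypercube V E d \<longleftrightarrow> (\<exists>f. bij_betw f V (Pow {1..d})
      \<and> (\<forall>x\<in>V. \<forall>y\<in>V. E x y \<longleftrightarrow> hypercube_adj (f x) (f y)))"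

end

(*
  Fix a vertex v. For an edge w y with y one step closer to v than w, testing the curvature
  against the distance to v, modified on the two neighbourhoods so that it stays 1-Lipschitz
  (this is where the absence of 3- and 5-cycles enters), shows that the fraction of neighbours
  one step closer to v is larger at w than at y by at least \<kappa>/2. By induction, a vertex w at
  distance k from v has at least k \<kappa>/2 deg(w) neighbours closer to v. Double counting the edges
  between consecutive distance layers then bounds the total degree of layer k by
  (2/\<kappa> choose k) deg(v). Summing over k \<le> 2/\<kappa> for v of minimum degree bounds |V| by a
  truncated binomial sum, which is at most 2^(2/\<kappa>), with equality only for integral 2/\<kappa>.
  In the equality case every estimate is tight: the graph is regular and every vertex at
  distance k from any vertex has exactly k neighbours one step closer. Labelling the neighbours
  of a base vertex by 1..d and giving each vertex the set of labels of the neighbours through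
  which a shortest path to it can pass then identifies the graph with the hypercube.
*)

theory Submission
  imports Defs "HOL-Analysis.Generalised_Binomial_Theorem"
begin

lemma tendsto_at_left_Sup_mono:
  fixes g :: "real \<Rightarrow> real"
  assumes "a < b" and mono: "\<And>s t. a \<le> s \<Longrightarrow> s \<le> t \<Longrightarrow> t < b \<Longrightarrow> g s \<le> g t"
    and bdd: "bdd_above (g ` {a..<b})"
  shows "(g \<longlongrightarrow> Sup (g ` {a..<b})) (at_left b)"
proof (rule order_tendstoI)
  fix c assume "c < Sup (g ` {a..<b})"
  then obtain s where s: "s \<in> {a..<b}" "c < g s"
    using less_cSup_iff[OF _ bdd] \<open>a < b\<close> by auto
  have "\<forall>\<^sub>F t in at_left b. t \<in> {s<..<b}" using s by (intro eventually_at_left_real) auto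
  then show "\<forall>\<^sub>F t in at_left b. c < g t"
  proof eventually_elim
    case (elim t)
    then have "g s \<le> g t" using s by (intro mono) auto
    then show ?case using s by simp
  qed
next
  fix c assume "Sup (g ` {a..<b}) < c"
  have "\<forall>\<^sub>F t in at_left b. t \<in> {a<..<b}" using \<open>a < b\<close> by (intro eventually_at_left_real) auto
  then show "\<forall>\<^sub>F t in at_left b. g t < c"
  proof eventually_elim
    case (elim t)
    then have "g t \<le> Sup (g ` {a..<b})" using bdd by (intro cSup_upper) auto
    then show ?case using \<open>Sup (g ` {a..<b}) < c\<close> by simp
  qed
qed

lemma sum_if_eq_card:
  fixes c1 c2 :: real
  assumes "finite A" "\<And>a. a \<in> A \<Longrightarrow> f a = (if P a then c1 else c2)"
  shows "(\<Sum>a\<in>A. f a) = c2 * real (card A) + (c1 - c2) * real (card {a\<in>A. P a})"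
proof -
  have "(\<Sum>a\<in>A. f a) = (\<Sum>a\<in>A. c2 + (if P a then c1 - c2 else 0))"
    using assms(2) by (intro sum.cong) auto
  also have "\<dots> = c2 * real (card A) + (\<Sum>a\<in>{a\<in>A. P a}. c1 - c2)"
    using sum.inter_filter[OF assms(1), of "\<lambda>_. c1 - c2" P] by (simp add: sum.distrib)
  finally show ?thesis by simp
qed

section \<open>Walks and graph distance\<close>

definition has_walk :: "('a \<Rightarrow> 'a \<Rightarrow> bool) \<Rightarrow> 'a \<Rightarrow> 'a \<Rightarrow> nat \<Rightarrow> bool" where
  "has_walk E u v n \<longleftrightarrow> (\<exists>xs. is_walk E u v n xs)"

lemma has_walk_0 [simp]: "has_walk E u v 0 \<longleftrightarrow> u = v"
proof
  assume "has_walk E u v 0"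
  then obtain xs where "length xs = 1" "hd xs = u" "last xs = v"
    by (auto simp: has_walk_def is_walk_def)
  then show "u = v" by (cases xs) auto
next
  assume "u = v"
  then show "has_walk E u v 0"
    unfolding has_walk_def is_walk_def by (intro exI[of _ "[u]"]) simp
qed

lemma has_walk_Suc: "has_walk E u v (Suc n) \<longleftrightarrow> (\<exists>w. E u w \<and> has_walk E w v n)"
proof
  assume "has_walk E u v (Suc n)"
  then obtain xs where w: "is_walk E u v (Suc n) xs" by (auto simp: has_walk_def)
  then obtain ys where xs: "xs = u # ys" unfolding is_walk_def by (cases xs) auto
  have "is_walk E (hd ys) v n ys"
    using w xs unfolding is_walk_def by (auto simp: nth_Cons' split: if_splits)
  moreover have "E u (hd ys)"
    using w xs unfolding is_walk_def by (cases ys) auto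
  ultimately show "\<exists>w. E u w \<and> has_walk E w v n" by (auto simp: has_walk_def)
next
  assume "\<exists>w. E u w \<and> has_walk E w v n"
  then obtain w ys where "E u w" "is_walk E w v n ys" by (auto simp: has_walk_def)
  then have "is_walk E u v (Suc n) (u # ys)"
    by (cases ys) (auto simp: is_walk_def less_Suc_eq_0_disj)
  then show "has_walk E u v (Suc n)" by (auto simp: has_walk_def)
qed

lemma has_walk_append: "has_walk E u w m \<Longrightarrow> has_walk E w v n \<Longrightarrow> has_walk E u v (m + n)"
  by (induction m arbitrary: u) (auto simp: has_walk_Suc)

lemma has_walk_rev:
  assumes "\<And>x y. E x y \<Longrightarrow> E y x"
  shows "has_walk E u v n \<Longrightarrow> has_walk E v u n"
proof (induction n arbitrary: u)
  case (Suc n)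
  then obtain w where uw: "E u w" and wv: "has_walk E w v n" by (auto simp: has_walk_Suc)
  from wv have "has_walk E v w n" by (rule Suc.IH)
  moreover have "has_walk E w u 1" using assms[OF uw] by (simp add: has_walk_Suc)
  ultimately show ?case using has_walk_append[of E v w n u 1] by simp
qed simp

lemma gdist_eq_Least: "gdist E u v = (LEAST n. has_walk E u v n)"
  by (simp add: gdist_def has_walk_def)

locale connected_simple_graph =
  fixes V :: "'a set" and E :: "'a \<Rightarrow> 'a \<Rightarrow> bool"
  assumes simple: "simple_graph V E" and connected: "connected_graph V E"
begin

lemma finite_V: "finite V"
  using simple by (simp add: simple_graph_def)

lemma adj_in_V: "E x y \<Longrightarrow> x \<in> V" "E x y \<Longrightarrow> y \<in> V"
  using simple by (simp_all add: simple_graph_def)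

lemma adj_sym: "E x y \<Longrightarrow> E y x"
  using simple by (simp add: simple_graph_def)

lemma adj_irrefl [simp]: "\<not> E x x"
  using simple by (simp add: simple_graph_def)

lemma V_nonempty: "V \<noteq> {}"
  using connected by (simp add: connected_graph_def)

lemma has_walk_gdist:
  assumes "u \<in> V" "v \<in> V"
  shows "has_walk E u v (gdist E u v)"
proof -
  obtain n where "has_walk E u v n"
    using connected assms unfolding connected_graph_def has_walk_def by blast
  then show ?thesis unfolding gdist_eq_Least by (rule LeastI)
qed

lemma gdist_le: "has_walk E u v n \<Longrightarrow> gdist E u v \<le> n"
  unfolding gdist_eq_Least by (rule Least_le)

lemma gdist_self [simp]: "gdist E u u = 0"
  using gdist_le[of u u 0] by simp

lemma gdist_eq_0_iff: "u \<in> V \<Longrightarrow> v \<in> V \<Longrightarrow> gdist E u v = 0 \<longleftrightarrow> u = v"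
  using has_walk_gdist[of u v] by auto

lemma gdist_sym: "gdist E u v = gdist E v u"
proof -
  have "has_walk E u v n \<longleftrightarrow> has_walk E v u n" for u v n
    using has_walk_rev[of E] adj_sym by blast
  then show ?thesis by (simp add: gdist_eq_Least)
qed

lemma gdist_adj: "E u v \<Longrightarrow> gdist E u v = 1"
  using gdist_le[of u v 1] gdist_eq_0_iff[of u v] adj_in_V[of u v]
  by (force simp: has_walk_Suc)

lemma gdist_triangle:
  "u \<in> V \<Longrightarrow> w \<in> V \<Longrightarrow> v \<in> V \<Longrightarrow> gdist E u v \<le> gdist E u w + gdist E w v"
  using gdist_le has_walk_append has_walk_gdist by metis

lemma gdist_eq_1_imp_adj: "u \<in> V \<Longrightarrow> v \<in> V \<Longrightarrow> gdist E u v = 1 \<Longrightarrow> E u v"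
  using has_walk_gdist[of u v] by (simp add: has_walk_Suc)

lemma gdist_eq_2_imp_common_nbr: "u \<in> V \<Longrightarrow> v \<in> V \<Longrightarrow> gdist E u v = 2 \<Longrightarrow> \<exists>c. E u c \<and> E c v"
  using has_walk_gdist[of u v] by (simp add: has_walk_Suc numeral_2_eq_2)

lemma gdist_adj_le: "E a b \<Longrightarrow> v \<in> V \<Longrightarrow> gdist E v b \<le> gdist E v a + 1"
  using gdist_triangle[of v a b] gdist_adj[of a b] adj_in_V by fastforce

lemma gdist_diff_le:
  "a \<in> V \<Longrightarrow> b \<in> V \<Longrightarrow> v \<in> V \<Longrightarrow> real (gdist E v a) - real (gdist E v b) \<le> real (gdist E a b)"
  using gdist_triangle[of v b a] gdist_sym[of a b] by simp

lemma gdist_ge_2: "a \<in> V \<Longrightarrow> b \<in> V \<Longrightarrow> a \<noteq> b \<Longrightarrow> \<not> E a b \<Longrightarrow> 2 \<le> gdist E a b"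
  using gdist_eq_0_iff[of a b] gdist_eq_1_imp_adj[of a b] by linarith

lemma gdist_SucE:
  assumes "v \<in> V" "w \<in> V" "gdist E v w = Suc j"
  obtains y where "E w y" "gdist E v y = j"
proof -
  have "has_walk E w v (Suc j)"
    using has_walk_gdist[of v w] assms has_walk_rev[of E] adj_sym by metis
  then obtain y where y: "E w y" "has_walk E y v j" by (auto simp: has_walk_Suc)
  then have "gdist E v y \<le> j" using gdist_le gdist_sym by metis
  moreover have "Suc j \<le> gdist E v y + 1" using gdist_adj_le[of y w v] y adj_sym assms by simp
  ultimately show thesis using that y by simp
qed

section \<open>Lazy random walks and transportation distance\<close>

definition nbr :: "'a \<Rightarrow> 'a set" where
  "nbr x = {a \<in> V. E x a}"

lemma finite_nbr: "finite (nbr x)"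
  using finite_V by (simp add: nbr_def)

lemma degree_eq_card_nbr: "degree V E x = card (nbr x)"
  by (simp add: degree_def nbr_def)

lemma degree_pos: "E x y \<Longrightarrow> 0 < degree V E x"
  unfolding degree_eq_card_nbr using finite_nbr[of x] adj_in_V(2)[of x y]
  by (auto simp: card_gt_0_iff nbr_def)

lemma sum_lazy_rw_mult:
  assumes "x \<in> V"
  shows "(\<Sum>v\<in>V. lazy_rw V E \<alpha> x v * g v)
       = \<alpha> * g x + (1 - \<alpha>) / real (degree V E x) * (\<Sum>v\<in>nbr x. g v)"
proof -
  have "(\<Sum>v\<in>V. lazy_rw V E \<alpha> x v * g v)
      = (\<Sum>v\<in>V. (if v = x then \<alpha> * g v else 0)
               + (if E x v then (1 - \<alpha>) / real (degree V E x) * g v else 0))"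
    by (rule sum.cong) (auto simp: lazy_rw_def)
  also have "\<dots> = \<alpha> * g x + (\<Sum>v\<in>V. if E x v then (1 - \<alpha>) / real (degree V E x) * g v else 0)"
    using assms finite_V by (simp add: sum.distrib)
  also have "(\<Sum>v\<in>V. if E x v then (1 - \<alpha>) / real (degree V E x) * g v else 0)
      = (\<Sum>v\<in>nbr x. (1 - \<alpha>) / real (degree V E x) * g v)"
    unfolding nbr_def by (simp only: sum.inter_filter[OF finite_V])
  finally show ?thesis by (simp add: sum_distrib_left)
qed

lemma sum_lazy_rw: "E x y \<Longrightarrow> (\<Sum>v\<in>V. lazy_rw V E \<alpha> x v) = 1"
  using sum_lazy_rw_mult[of x \<alpha> "\<lambda>_. 1"] adj_in_V(1)[of x y] degree_pos[of x y]
  by (simp add: degree_eq_card_nbr)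

lemma lazy_rw_nonneg: "0 \<le> \<alpha> \<Longrightarrow> \<alpha> \<le> 1 \<Longrightarrow> 0 \<le> lazy_rw V E \<alpha> x v"
  by (simp add: lazy_rw_def)

lemma lazy_rw_le_1:
  assumes "0 \<le> \<alpha>" "\<alpha> \<le> 1" "E x y"
  shows "lazy_rw V E \<alpha> x v \<le> 1"
proof -
  have "1 \<le> real (degree V E x)" using degree_pos[OF assms(3)] by simp
  then have "(1 - \<alpha>) / real (degree V E x) \<le> 1 - \<alpha>"
    using assms by (simp add: divide_le_eq mult_le_cancel_left1)
  then show ?thesis using assms by (auto simp: lazy_rw_def)
qed

lemma lazy_rw_support: "lazy_rw V E \<alpha> x a \<noteq> 0 \<Longrightarrow> a \<in> insert x (nbr x)"
  by (auto simp: lazy_rw_def nbr_def split: if_splits dest: adj_in_V(2))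

lemma coupling_product:
  assumes "E x y" "0 \<le> \<alpha>" "\<alpha> \<le> 1"
  shows "coupling V (lazy_rw V E \<alpha> x) (lazy_rw V E \<alpha> y)
           (\<lambda>a b. lazy_rw V E \<alpha> x a * lazy_rw V E \<alpha> y b)"
  unfolding coupling_def
  using lazy_rw_nonneg[OF assms(2,3)] lazy_rw_le_1[OF assms(2,3)] assms(1) adj_sym[OF assms(1)]
  by (auto simp: mult_le_one simp flip: sum_distrib_left sum_distrib_right
           simp add: sum_lazy_rw)

definition coupling_cost :: "('a \<Rightarrow> 'a \<Rightarrow> real) \<Rightarrow> real" where
  "coupling_cost A = (\<Sum>x\<in>V. \<Sum>y\<in>V. A x y * real (gdist E x y))"

lemma transport_le_cost: "coupling V m1 m2 A \<Longrightarrow> transport V E m1 m2 \<le> coupling_cost A"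
  unfolding transport_def coupling_cost_def
  by (rule cInf_lower) (auto simp: coupling_def bdd_below_def intro!: exI[of _ 0] sum_nonneg)

lemma le_transport:
  assumes "coupling V m1 m2 A0" "\<And>A. coupling V m1 m2 A \<Longrightarrow> c \<le> coupling_cost A"
  shows "c \<le> transport V E m1 m2"
  unfolding transport_def using assms by (intro cInf_greatest) (auto simp: coupling_cost_def)

text \<open>The easy half of Kantorovich duality.\<close>
lemma expectation_diff_le_cost:
  assumes A: "coupling V m1 m2 A"
    and lip: "\<And>a b. a \<in> V \<Longrightarrow> b \<in> V \<Longrightarrow> m1 a \<noteq> 0 \<Longrightarrow> m2 b \<noteq> 0 \<Longrightarrow> f a - f b \<le> real (gdist E a b)"
  shows "(\<Sum>a\<in>V. m1 a * f a) - (\<Sum>b\<in>V. m2 b * f b) \<le> coupling_cost A"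
proof -
  have nonneg: "\<And>a b. a \<in> V \<Longrightarrow> b \<in> V \<Longrightarrow> 0 \<le> A a b"
    and row: "\<And>a. a \<in> V \<Longrightarrow> (\<Sum>b\<in>V. A a b) = m1 a"
    and col: "\<And>b. b \<in> V \<Longrightarrow> (\<Sum>a\<in>V. A a b) = m2 b"
    using A by (auto simp: coupling_def)
  have term_le: "A a b * (f a - f b) \<le> A a b * real (gdist E a b)" if ab: "a \<in> V" "b \<in> V" for a b
  proof (cases "A a b = 0")
    case False
    then have pos: "0 < A a b" using nonneg[OF ab] by simp
    have "A a b \<le> (\<Sum>b'\<in>V. A a b')" using ab nonneg finite_V by (intro member_le_sum) auto
    moreover have "A a b \<le> (\<Sum>a'\<in>V. A a' b)" using ab nonneg finite_V by (intro member_le_sum) auto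
    ultimately have "m1 a \<noteq> 0" "m2 b \<noteq> 0" using row[OF ab(1)] col[OF ab(2)] pos by auto
    then show ?thesis using lip[OF ab] pos by (intro mult_left_mono) auto
  qed simp
  have "(\<Sum>a\<in>V. m1 a * f a) = (\<Sum>a\<in>V. \<Sum>b\<in>V. A a b * f a)"
    by (rule sum.cong[OF refl]) (simp add: row[symmetric] sum_distrib_right)
  moreover have "(\<Sum>b\<in>V. m2 b * f b) = (\<Sum>a\<in>V. \<Sum>b\<in>V. A a b * f b)"
    by (subst sum.swap, rule sum.cong[OF refl]) (simp add: col[symmetric] sum_distrib_right)
  ultimately have "(\<Sum>a\<in>V. m1 a * f a) - (\<Sum>b\<in>V. m2 b * f b)
      = (\<Sum>a\<in>V. \<Sum>b\<in>V. A a b * (f a - f b))"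
    by (simp add: right_diff_distrib sum_subtractf)
  also have "\<dots> \<le> coupling_cost A"
    unfolding coupling_cost_def using term_le by (intro sum_mono) auto
  finally show ?thesis .
qed

lemma kappa_alpha_le:
  assumes e: "E x y" and \<alpha>: "0 \<le> \<alpha>" "\<alpha> \<le> 1"
    and lip: "\<And>a b. a \<in> insert x (nbr x) \<Longrightarrow> b \<in> insert y (nbr y) \<Longrightarrow> f a - f b \<le> real (gdist E a b)"
    and f_xy: "f x - f y = 1"
  shows "kappa_alpha V E \<alpha> x y
    \<le> (1 - \<alpha>) * (1 - (\<Sum>a\<in>nbr x. f a) / real (degree V E x) + (\<Sum>a\<in>nbr y. f a) / real (degree V E y))"
proof -
  let ?mx = "lazy_rw V E \<alpha> x" and ?my = "lazy_rw V E \<alpha> y"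
  have "(\<Sum>a\<in>V. ?mx a * f a) - (\<Sum>b\<in>V. ?my b * f b) \<le> transport V E ?mx ?my"
  proof (rule le_transport[OF coupling_product[OF e \<alpha>]])
    fix A assume "coupling V ?mx ?my A"
    then show "(\<Sum>a\<in>V. ?mx a * f a) - (\<Sum>b\<in>V. ?my b * f b) \<le> coupling_cost A"
      by (rule expectation_diff_le_cost) (rule lip; rule lazy_rw_support; assumption)
  qed
  moreover note sum_lazy_rw_mult[OF adj_in_V(1)[OF e], of \<alpha> f]
    and sum_lazy_rw_mult[OF adj_in_V(2)[OF e], of \<alpha> f]
  ultimately have "kappa_alpha V E \<alpha> x y \<le> 1 - ((\<alpha> * f x + (1 - \<alpha>) / real (degree V E x) * (\<Sum>a\<in>nbr x. f a))
       - (\<alpha> * f y + (1 - \<alpha>) / real (degree V E y) * (\<Sum>a\<in>nbr y. f a)))"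
    by (simp add: kappa_alpha_def gdist_adj[OF e])
  also have "\<dots> = (1 - \<alpha>) * (1 - (\<Sum>a\<in>nbr x. f a) / real (degree V E x) + (\<Sum>a\<in>nbr y. f a) / real (degree V E y))"
    using f_xy by (simp add: algebra_simps)
  finally show ?thesis .
qed

lemma lazy_rw_mixture:
  assumes "\<theta> * (1 - \<alpha>) = 1 - \<beta>"
  shows "lazy_rw V E \<beta> x a = \<theta> * lazy_rw V E \<alpha> x a + (1 - \<theta>) * (if a = x then 1 else 0)"
proof (cases "a = x")
  case True
  then show ?thesis using assms by (simp add: lazy_rw_def algebra_simps)
next
  case False
  then show ?thesis using assms by (auto simp: lazy_rw_def)
qed

lemma coupling_convex_comb:
  assumes A: "coupling V m1 m2 A" and B: "coupling V n1 n2 B" and \<theta>: "0 \<le> \<theta>" "\<theta> \<le> 1"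
  shows "coupling V (\<lambda>a. \<theta> * m1 a + (1 - \<theta>) * n1 a) (\<lambda>b. \<theta> * m2 b + (1 - \<theta>) * n2 b)
           (\<lambda>a b. \<theta> * A a b + (1 - \<theta>) * B a b)"
  unfolding coupling_def
proof (intro conjI ballI)
  fix a b assume "a \<in> V" "b \<in> V"
  then have "0 \<le> A a b" "A a b \<le> 1" "0 \<le> B a b" "B a b \<le> 1"
    using A B by (auto simp: coupling_def)
  then show "0 \<le> \<theta> * A a b + (1 - \<theta>) * B a b" "\<theta> * A a b + (1 - \<theta>) * B a b \<le> 1"
    using \<theta> convex_bound_le[of "A a b" 1 "B a b" \<theta> "1 - \<theta>"] by auto
qed (use A B in \<open>auto simp: coupling_def sum.distrib simp flip: sum_distrib_left\<close>)

lemma coupling_point_masses: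
  "x \<in> V \<Longrightarrow> y \<in> V \<Longrightarrow> coupling V (\<lambda>a. if a = x then 1 else 0) (\<lambda>b. if b = y then 1 else 0)
     (\<lambda>a b. if a = x \<and> b = y then 1 else 0)"
  using finite_V by (auto simp: coupling_def)

lemma coupling_cost_convex_comb:
  "coupling_cost (\<lambda>a b. \<theta> * A a b + \<mu> * B a b) = \<theta> * coupling_cost A + \<mu> * coupling_cost B"
  by (simp add: coupling_cost_def distrib_right sum.distrib sum_distrib_left mult.assoc)

lemma coupling_cost_point_masses:
  assumes "x \<in> V" "y \<in> V"
  shows "coupling_cost (\<lambda>a b. if a = x \<and> b = y then 1 else 0) = real (gdist E x y)"
proof -
  have "coupling_cost (\<lambda>a b. if a = x \<and> b = y then 1 else 0)
      = (\<Sum>a\<in>V. \<Sum>b\<in>V. if b = y then if a = x then real (gdist E x y) else 0 else 0)"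
    unfolding coupling_cost_def by (intro sum.cong refl) auto
  then show ?thesis using assms finite_V by simp
qed

text \<open>Mixing any coupling of the \<open>\<alpha>\<close>-lazy walks with the coupling of the two
  point masses gives a coupling of the \<open>\<beta>\<close>-lazy walks.\<close>
lemma transport_lazy_rw_convex:
  assumes e: "E x y" and \<alpha>\<beta>: "0 \<le> \<alpha>" "\<alpha> \<le> \<beta>" "\<beta> < 1"
  defines "\<theta> \<equiv> (1 - \<beta>) / (1 - \<alpha>)"
  shows "transport V E (lazy_rw V E \<beta> x) (lazy_rw V E \<beta> y)
     \<le> \<theta> * transport V E (lazy_rw V E \<alpha> x) (lazy_rw V E \<alpha> y) + (1 - \<theta>)"
proof -
  have \<theta>: "0 < \<theta>" "\<theta> \<le> 1" "\<theta> * (1 - \<alpha>) = 1 - \<beta>" using \<alpha>\<beta> by (auto simp: \<theta>_def)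
  have xy: "x \<in> V" "y \<in> V" using adj_in_V[OF e] by auto
  let ?T = "transport V E (lazy_rw V E \<beta> x) (lazy_rw V E \<beta> y)"
  let ?P = "\<lambda>a b. if a = x \<and> b = y then 1 else 0 :: real"
  have mix: "lazy_rw V E \<beta> z = (\<lambda>a. \<theta> * lazy_rw V E \<alpha> z a + (1 - \<theta>) * (if a = z then 1 else 0))" for z
    using lazy_rw_mixture[OF \<theta>(3)] by blast
  have "(?T - (1 - \<theta>)) / \<theta> \<le> transport V E (lazy_rw V E \<alpha> x) (lazy_rw V E \<alpha> y)"
  proof (rule le_transport[OF coupling_product[OF e]])
    fix A assume A: "coupling V (lazy_rw V E \<alpha> x) (lazy_rw V E \<alpha> y) A"
    have "coupling V (lazy_rw V E \<beta> x) (lazy_rw V E \<beta> y) (\<lambda>a b. \<theta> * A a b + (1 - \<theta>) * ?P a b)"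
      unfolding mix using coupling_convex_comb[OF A coupling_point_masses[OF xy] \<theta>(1)[THEN less_imp_le] \<theta>(2)] .
    then have "?T \<le> coupling_cost (\<lambda>a b. \<theta> * A a b + (1 - \<theta>) * ?P a b)"
      by (rule transport_le_cost)
    also have "\<dots> = \<theta> * coupling_cost A + (1 - \<theta>)"
      by (simp add: coupling_cost_convex_comb coupling_cost_point_masses[OF xy] gdist_adj[OF e])
    finally have "?T \<le> \<theta> * coupling_cost A + (1 - \<theta>)" .
    then show "(?T - (1 - \<theta>)) / \<theta> \<le> coupling_cost A"
      using \<theta> by (simp add: divide_le_eq algebra_simps)
  qed (use \<alpha>\<beta> in auto)
  then show ?thesis using \<theta> by (simp add: divide_le_eq algebra_simps)
qed

lemma kappa_alpha_div_mono:
  assumes e: "E x y" and \<alpha>\<beta>: "0 \<le> \<alpha>" "\<alpha> \<le> \<beta>" "\<beta> < 1"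
  shows "kappa_alpha V E \<alpha> x y / (1 - \<alpha>) \<le> kappa_alpha V E \<beta> x y / (1 - \<beta>)"
proof -
  define \<theta> where "\<theta> = (1 - \<beta>) / (1 - \<alpha>)"
  let ?T\<alpha> = "transport V E (lazy_rw V E \<alpha> x) (lazy_rw V E \<alpha> y)"
  let ?T\<beta> = "transport V E (lazy_rw V E \<beta> x) (lazy_rw V E \<beta> y)"
  have "(1 - ?T\<alpha>) / (1 - \<alpha>) = \<theta> * (1 - ?T\<alpha>) / (1 - \<beta>)"
    using \<alpha>\<beta> unfolding \<theta>_def by simp
  also have "\<dots> \<le> (1 - ?T\<beta>) / (1 - \<beta>)"
    using transport_lazy_rw_convex[OF e \<alpha>\<beta>] \<alpha>\<beta>
    by (intro divide_right_mono) (auto simp: \<theta>_def algebra_simps)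
  finally show ?thesis by (simp add: kappa_alpha_def gdist_adj[OF e])
qed

text \<open>Since \<open>\<kappa>\<^sub>\<alpha>/(1 - \<alpha>)\<close> increases with \<open>\<alpha>\<close>, the limit defining the curvature is its
  supremum, so a bound uniform in \<open>\<alpha>\<close> bounds the curvature.\<close>
lemma kappa_LLY_le:
  assumes e: "E x y"
    and lip: "\<And>a b. a \<in> insert x (nbr x) \<Longrightarrow> b \<in> insert y (nbr y) \<Longrightarrow> f a - f b \<le> real (gdist E a b)"
    and f_xy: "f x - f y = 1"
  shows "kappa_LLY V E x y
    \<le> 1 - (\<Sum>a\<in>nbr x. f a) / real (degree V E x) + (\<Sum>a\<in>nbr y. f a) / real (degree V E y)"
    (is "_ \<le> ?C")
proof -
  define g where "g = (\<lambda>\<alpha>. kappa_alpha V E \<alpha> x y / (1 - \<alpha>))"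
  have bound: "g \<alpha> \<le> ?C" if "0 \<le> \<alpha>" "\<alpha> < 1" for \<alpha>
    using kappa_alpha_le[OF e that(1) _ lip f_xy] that
    by (simp add: g_def divide_le_eq mult.commute)
  have bdd: "bdd_above (g ` {0..<1})" by (rule bdd_aboveI[of _ ?C]) (use bound in auto)
  have mono: "g s \<le> g t" if "0 \<le> s" "s \<le> t" "t < 1" for s t
    using kappa_alpha_div_mono[OF e that] by (simp add: g_def)
  have "(g \<longlongrightarrow> Sup (g ` {0..<1})) (at_left 1)"
    using tendsto_at_left_Sup_mono[OF _ mono bdd] by simp
  then have "kappa_LLY V E x y = Sup (g ` {0..<1})"
    unfolding kappa_LLY_def g_def[symmetric] by (rule tendsto_Lim[rotated]) simp
  also have "\<dots> \<le> ?C" using bound by (intro cSup_least) auto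
  finally show ?thesis .
qed

section \<open>A test function for edges without short odd cycles\<close>

definition down_degree :: "'a \<Rightarrow> 'a \<Rightarrow> nat" where
  "down_degree v w = card {a \<in> V. E w a \<and> gdist E v a + 1 = gdist E v w}"

definition up_degree :: "'a \<Rightarrow> 'a \<Rightarrow> nat" where
  "up_degree v w = card {a \<in> V. E w a \<and> gdist E v a = gdist E v w + 1}"

lemma down_up_degree_le: "down_degree v w + up_degree v w \<le> degree V E w"
proof -
  have "down_degree v w + up_degree v w
      = card ({a \<in> V. E w a \<and> gdist E v a + 1 = gdist E v w} \<union> {a \<in> V. E w a \<and> gdist E v a = gdist E v w + 1})"
    unfolding down_degree_def up_degree_def using finite_V by (intro card_Un_disjoint[symmetric]) auto
  also have "\<dots> \<le> card (nbr w)" using finite_nbr by (intro card_mono) (auto simp: nbr_def)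
  finally show ?thesis by (simp add: degree_eq_card_nbr)
qed

text \<open>Relative to a base vertex \<open>v\<close> and an edge \<open>w y\<close> pointing towards \<open>v\<close>, this modifies
  the distance to \<open>v\<close> on the two neighbourhoods so as to make it increase by exactly 1 along
  the edge while staying 1-Lipschitz between them.\<close>
definition edge_test_fn :: "'a \<Rightarrow> 'a \<Rightarrow> 'a \<Rightarrow> 'a \<Rightarrow> real" where
  "edge_test_fn v w y z =
     (if E w z \<and> gdist E v w \<le> gdist E v z then real (gdist E v w) + 1
      else if E y z \<and> gdist E v w \<le> gdist E v z + 1 then real (gdist E v w)
      else real (gdist E v z))"

end

locale C3_C5_free_graph = connected_simple_graph +
  assumes no_C3: "no_C3 E" and no_C5: "no_C5 E"
begin

lemma no_triangle: "E a b \<Longrightarrow> E b c \<Longrightarrow> E c a \<Longrightarrow> False"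
  using no_C3 adj_irrefl unfolding no_C3_def by (metis distinct_length_2_or_more distinct_singleton)

lemma gdist_path3_ne_2:
  assumes aw: "E a w" and wy: "E w y" and yb: "E y b" and "a \<noteq> y" "w \<noteq> b" "a \<noteq> b"
  shows "gdist E a b \<noteq> 2"
proof
  assume "gdist E a b = 2"
  then obtain c where ac: "E a c" and cb: "E c b"
    using gdist_eq_2_imp_common_nbr adj_in_V aw yb by blast
  have "c \<noteq> w" using no_triangle[OF wy yb] adj_sym[OF cb] by blast
  moreover have "c \<noteq> y" using no_triangle[OF aw wy] adj_sym[OF ac] by blast
  ultimately have "distinct [a, w, y, b, c]"
    using assms ac cb adj_irrefl by auto
  then show False
    using no_C5 aw wy yb adj_sym[OF cb] adj_sym[OF ac] unfolding no_C5_def by blast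
qed

context
  fixes v w y :: 'a and j :: nat
  assumes v: "v \<in> V" and wy: "E w y" and dist_w: "gdist E v w = Suc j" and dist_y: "gdist E v y = j"
begin

private lemma gdist_adj_bounds: "E a b \<Longrightarrow> gdist E v b \<le> gdist E v a + 1 \<and> gdist E v a \<le> gdist E v b + 1"
  using gdist_adj_le[OF _ v] adj_sym by blast

lemma edge_test_fn_w: "edge_test_fn v w y w = real (Suc j)"
  using wy adj_sym[OF wy] dist_w by (auto simp: edge_test_fn_def)

lemma edge_test_fn_y: "edge_test_fn v w y y = real j"
  using wy dist_w dist_y by (auto simp: edge_test_fn_def)

lemma edge_test_fn_far:
  assumes wa: "E w a" and far: "Suc j \<le> gdist E v a" and b: "b \<in> insert y (nbr y)"
  shows "real (Suc j) + 1 - edge_test_fn v w y b \<le> real (gdist E a b)"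
proof -
  have aV: "a \<in> V" and bV: "b \<in> V" using adj_in_V wa wy b by (auto simp: nbr_def)
  have ay: "\<not> E a y" "a \<noteq> y" using no_triangle[OF wa _ adj_sym[OF wy]] far dist_y by auto
  consider "b = y" | "b = w" | "E y b" "b \<noteq> y" "b \<noteq> w" using b by (auto simp: nbr_def)
  then show ?thesis
  proof cases
    case 1
    then show ?thesis using gdist_ge_2[OF aV bV] ay edge_test_fn_y by simp
  next
    case 2
    then show ?thesis using edge_test_fn_w gdist_adj[OF adj_sym[OF wa]] by simp
  next
    case 3
    have "a \<noteq> b" using ay(1) adj_sym 3(1) by blast
    then have ab1: "1 \<le> gdist E a b" using gdist_eq_0_iff[OF aV bV] by simp
    show ?thesis
    proof (cases "Suc j \<le> gdist E v b + 1")
      case True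
      then have "real (Suc j) \<le> edge_test_fn v w y b" using 3(1) dist_w by (auto simp: edge_test_fn_def)
      then show ?thesis using ab1 by simp
    next
      case False
      then have db: "gdist E v b + 2 = Suc j" using gdist_adj_bounds[OF 3(1)] dist_y by simp
      then have "\<not> E w b" using gdist_adj_bounds[of w b] dist_w by auto
      then have fb: "edge_test_fn v w y b = real (gdist E v b)"
        using False by (simp add: edge_test_fn_def dist_w)
      have "2 \<le> gdist E a b" using gdist_diff_le[OF aV bV v] far db by simp
      moreover have "gdist E a b \<noteq> 2"
        using gdist_path3_ne_2[OF wa[THEN adj_sym] wy 3(1) ay(2) 3(3)[symmetric] \<open>a \<noteq> b\<close>] .
      ultimately show ?thesis using fb db by simp
    qed
  qed
qed

lemma edge_test_fn_lipschitz:
  assumes a: "a \<in> insert w (nbr w)" and b: "b \<in> insert y (nbr y)"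
  shows "edge_test_fn v w y a - edge_test_fn v w y b \<le> real (gdist E a b)"
proof (cases "E w a \<and> Suc j \<le> gdist E v a")
  case True
  then show ?thesis using edge_test_fn_far[OF _ _ b] dist_w by (simp add: edge_test_fn_def)
next
  case False
  have aV: "a \<in> V" and bV: "b \<in> V" using adj_in_V wy a b by (auto simp: nbr_def)
  have "edge_test_fn v w y a \<le> real (gdist E v a)"
  proof (cases "a = w")
    case False
    then have "E w a" using a by (simp add: nbr_def)
    then have "\<not> E y a" using no_triangle[OF wy _ adj_sym] by blast
    then show ?thesis using \<open>\<not> (E w a \<and> Suc j \<le> gdist E v a)\<close> dist_w by (auto simp: edge_test_fn_def)
  qed (use edge_test_fn_w dist_w in simp)
  moreover have "real (gdist E v b) \<le> edge_test_fn v w y b"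
  proof -
    have "gdist E v b \<le> Suc j" using b gdist_adj_bounds[of y b] dist_y by (auto simp: nbr_def)
    then show ?thesis using dist_w by (auto simp: edge_test_fn_def)
  qed
  ultimately show ?thesis using gdist_diff_le[OF aV bV v] by simp
qed

lemma sum_edge_test_fn_nbr_w:
  "(\<Sum>a\<in>nbr w. edge_test_fn v w y a) = real (Suc j + 1) * real (degree V E w) - 2 * real (down_degree v w)"
proof -
  have "(\<Sum>a\<in>nbr w. edge_test_fn v w y a)
      = real (Suc j + 1) * real (card (nbr w)) + (real j - real (Suc j + 1)) * real (card {a\<in>nbr w. gdist E v a + 1 = gdist E v w})"
  proof (rule sum_if_eq_card[OF finite_nbr])
    fix a assume "a \<in> nbr w"
    then have wa: "E w a" by (simp add: nbr_def)
    then have "\<not> E y a" using no_triangle[OF wy _ adj_sym[OF wa]] by blast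
    then show "edge_test_fn v w y a = (if gdist E v a + 1 = gdist E v w then real j else real (Suc j + 1))"
      using gdist_adj_bounds[OF wa] dist_w wa by (auto simp: edge_test_fn_def)
  qed
  moreover have "{a\<in>nbr w. gdist E v a + 1 = gdist E v w} = {a \<in> V. E w a \<and> gdist E v a + 1 = gdist E v w}"
    by (auto simp: nbr_def)
  ultimately show ?thesis by (simp add: down_degree_def degree_eq_card_nbr algebra_simps)
qed

lemma sum_edge_test_fn_nbr_y:
  "(\<Sum>a\<in>nbr y. edge_test_fn v w y a) = real (Suc j) * real (degree V E y) - 2 * real (down_degree v y)"
proof -
  have "(\<Sum>a\<in>nbr y. edge_test_fn v w y a)
      = real (Suc j) * real (card (nbr y)) + ((real (Suc j) - 2) - real (Suc j)) * real (card {a\<in>nbr y. gdist E v a + 1 = gdist E v y})"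
  proof (rule sum_if_eq_card[OF finite_nbr])
    fix a assume "a \<in> nbr y"
    then have ya: "E y a" by (simp add: nbr_def)
    then have "\<not> E w a" using no_triangle[OF wy ya] adj_sym by blast
    then show "edge_test_fn v w y a = (if gdist E v a + 1 = gdist E v y then real (Suc j) - 2 else real (Suc j))"
      using gdist_adj_bounds[OF ya] dist_w dist_y ya by (auto simp: edge_test_fn_def)
  qed
  moreover have "{a\<in>nbr y. gdist E v a + 1 = gdist E v y} = {a \<in> V. E y a \<and> gdist E v a + 1 = gdist E v y}"
    by (auto simp: nbr_def)
  ultimately show ?thesis by (simp add: down_degree_def degree_eq_card_nbr algebra_simps)
qed

lemma kappa_LLY_le_down_degree:
  "kappa_LLY V E w y \<le> 2 * real (down_degree v w) / real (degree V E w) - 2 * real (down_degree v y) / real (degree V E y)"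
proof -
  have "kappa_LLY V E w y
      \<le> 1 - (\<Sum>a\<in>nbr w. edge_test_fn v w y a) / real (degree V E w) + (\<Sum>a\<in>nbr y. edge_test_fn v w y a) / real (degree V E y)"
    using kappa_LLY_le[OF wy edge_test_fn_lipschitz] edge_test_fn_w edge_test_fn_y by simp
  also have "\<dots> = 2 * real (down_degree v w) / real (degree V E w) - 2 * real (down_degree v y) / real (degree V E y)"
    using degree_pos[OF wy] degree_pos[OF adj_sym[OF wy]]
    unfolding sum_edge_test_fn_nbr_w sum_edge_test_fn_nbr_y by (simp add: field_simps)
  finally show ?thesis .
qed

end

end

section \<open>Truncated binomial sums\<close>

lemma Suc_times_gbinomial_Suc: "real (Suc k) * ((a::real) gchoose Suc k) = (a - real k) * (a gchoose k)"
  using gbinomial_absorption[of k a] gbinomial_absorb_comp[of a k] by simp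

lemma gbinomial_Suc_eq: "(a::real) gchoose (Suc k) = (a gchoose k) * (a - real k) / real (Suc k)"
  using Suc_times_gbinomial_Suc[of k a] by (simp add: field_simps del: of_nat_Suc)

lemma gbinomial_pos: "real k < x + 1 \<Longrightarrow> 0 < (x::real) gchoose k"
  by (induction k) (auto simp: gbinomial_Suc_eq)

lemma Leibniz_suminf_ge:
  fixes a r :: "nat \<Rightarrow> real"
  assumes a0: "0 \<le> a 0" and step: "\<And>i. a (Suc i) = a i * r i"
    and r: "\<And>i. 0 \<le> r i" "\<And>i. r i \<le> z" and "z < 1"
  shows "a 0 - a 1 \<le> (\<Sum>i. (-1) ^ i * a i)"
proof -
  have nonneg: "0 \<le> a i" for i
    by (induction i) (use a0 step r in auto)
  have decr: "a (Suc i) \<le> a i" for i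
    using step[of i] nonneg[of i] r[of i] \<open>z < 1\<close> by (simp add: mult_left_le)
  have bound: "a i \<le> a 0 * z ^ i" for i
  proof (induction i)
    case (Suc i)
    have "a (Suc i) \<le> (a 0 * z ^ i) * z"
      unfolding step using Suc nonneg[of i] r[of i] by (intro mult_mono) auto
    then show ?case by (simp add: mult_ac)
  qed simp
  have "0 \<le> z" using r(1)[of 0] r(2)[of 0] by linarith
  have "a \<longlonglongrightarrow> 0"
  proof (rule tendsto_sandwich[of "\<lambda>_. 0" _ _ "\<lambda>i. a 0 * z ^ i"])
    show "(\<lambda>i. a 0 * z ^ i) \<longlonglongrightarrow> 0"
      using \<open>0 \<le> z\<close> \<open>z < 1\<close> by (intro tendsto_mult_right_zero LIMSEQ_power_zero) auto
  qed (use nonneg bound in auto)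
  from summable_Leibniz'(2)[OF this nonneg decr, of 1] show ?thesis
    by (simp add: numeral_2_eq_2)
qed

text \<open>For \<open>m < x < m + 1\<close> the tail of the binomial series of \<open>(1 + z) powr x\<close> from index
  \<open>m + 1\<close> on alternates with decreasing terms.\<close>
lemma gbinomial_partial_sum_le_powr:
  fixes x z :: real
  assumes x: "real m < x" "x < real m + 1" and z: "0 < z" "z < 1"
  shows "(\<Sum>k<m + 3. (x gchoose k) * z ^ k) \<le> (1 + z) powr x"
proof -
  define c where "c n = (x gchoose n) * z ^ n" for n
  have "c sums (1 + z) powr x"
    unfolding c_def using z by (intro gen_binomial_real) auto
  then have tail: "(\<lambda>i. c (i + Suc m)) sums ((1 + z) powr x - (\<Sum>k<Suc m. c k))"
    using sums_iff_shift[of c "Suc m"] by simp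
  define a where "a i = (-1) ^ i * c (i + Suc m)" for i
  define r where "r i = (real (i + Suc m) - x) / real (Suc (i + Suc m)) * z" for i
  have "a 0 - a 1 \<le> (\<Sum>i. (-1) ^ i * a i)"
  proof (rule Leibniz_suminf_ge)
    show "0 \<le> a 0" using gbinomial_pos[of "Suc m" x] x z by (simp add: a_def c_def)
    show "a (Suc i) = a i * r i" for i
      by (simp add: a_def c_def r_def gbinomial_Suc_eq field_simps del: of_nat_Suc of_nat_add)
    show "0 \<le> r i" "r i \<le> z" for i
      using x z by (auto simp: r_def divide_le_eq mult_le_cancel_right1 simp del: of_nat_Suc)
  qed (use z in auto)
  also have "(\<Sum>i. (-1) ^ i * a i) = (1 + z) powr x - (\<Sum>k<Suc m. c k)"
    using sums_unique[OF tail] by (simp add: a_def flip: mult.assoc power_add)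
  finally show ?thesis by (simp add: a_def c_def numeral_3_eq_3)
qed

definition gbinomial_floor_sum :: "real \<Rightarrow> real" where
  "gbinomial_floor_sum x = (\<Sum>k\<le>nat \<lfloor>x\<rfloor>. x gchoose k)"

lemma gbinomial_floor_sum_of_nat: "gbinomial_floor_sum (real m) = 2 ^ m"
  by (simp add: gbinomial_floor_sum_def binomial_gbinomial[symmetric] choose_row_sum flip: of_nat_sum)

lemma gbinomial_floor_sum_ge_1:
  assumes "0 \<le> x"
  shows "1 \<le> gbinomial_floor_sum x"
proof -
  have "0 \<le> x gchoose k" if "k \<in> {..nat \<lfloor>x\<rfloor>}" for k
    using gbinomial_pos[of k x] that assms by (simp add: le_nat_iff le_floor_iff)
  then show ?thesis
    unfolding gbinomial_floor_sum_def using member_le_sum[of 0 "{..nat \<lfloor>x\<rfloor>}" "\<lambda>k. x gchoose k"] by simp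
qed

lemma gbinomial_floor_sum_less_two_powr:
  assumes "0 \<le> x" "x \<notin> \<nat>"
  shows "gbinomial_floor_sum x < 2 powr x"
proof -
  define m where "m = nat \<lfloor>x\<rfloor>"
  have "real m = of_int \<lfloor>x\<rfloor>" using assms(1) by (simp add: m_def)
  then have "real m \<le> x" "x < real m + 1" using floor_correct[of x] by auto
  moreover have "real m \<noteq> x" using assms(2) of_nat_in_Nats by metis
  ultimately have x: "real m < x" "x < real m + 1" by simp_all
  let ?p = "\<lambda>z. \<Sum>k<m + 3. (x gchoose k) * z ^ k"
  have "((\<lambda>z. (1 + z) powr x) \<longlongrightarrow> (1 + 1) powr x) (at_left 1)"
    by (intro tendsto_intros) auto
  moreover have "(?p \<longlongrightarrow> ?p 1) (at_left 1)"
    by (intro tendsto_intros)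
  moreover have "\<forall>\<^sub>F z in at_left 1. ?p z \<le> (1 + z) powr x"
  proof -
    have "\<forall>\<^sub>F z in at_left 1. z \<in> {0<..<(1::real)}" by (rule eventually_at_left_real) simp
    then show ?thesis by eventually_elim (auto intro: gbinomial_partial_sum_le_powr[OF x])
  qed
  ultimately have "?p 1 \<le> 2 powr x"
    using tendsto_le[OF trivial_limit_at_left_real] by fastforce
  moreover have "0 < (x gchoose Suc m) + (x gchoose Suc (Suc m))"
    using gbinomial_pos[of "Suc (Suc m)" "x + 1"] x by (simp add: gbinomial_Suc_Suc)
  moreover have "?p 1 = gbinomial_floor_sum x + (x gchoose Suc m) + (x gchoose Suc (Suc m))"
    by (simp add: gbinomial_floor_sum_def m_def lessThan_Suc_atMost numeral_3_eq_3)
  ultimately show ?thesis by linarith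
qed

lemma gbinomial_floor_sum_le_two_powr: "0 \<le> x \<Longrightarrow> gbinomial_floor_sum x \<le> 2 powr x"
  using gbinomial_floor_sum_less_two_powr[of x] gbinomial_floor_sum_of_nat
  by (cases "x \<in> \<nat>") (auto elim!: Nats_cases simp: powr_realpow)

lemma gbinomial_floor_sum_eq_two_powr_iff:
  "0 \<le> x \<Longrightarrow> gbinomial_floor_sum x = 2 powr x \<longleftrightarrow> x \<in> \<nat>"
  using gbinomial_floor_sum_less_two_powr[of x] gbinomial_floor_sum_of_nat
  by (cases "x \<in> \<nat>") (auto elim!: Nats_cases simp: powr_realpow)

section \<open>Distance layers\<close>

context connected_simple_graph
begin

definition layer :: "'a \<Rightarrow> nat \<Rightarrow> 'a set" where
  "layer v k = {w \<in> V. gdist E v w = k}"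

definition layer_volume :: "'a \<Rightarrow> nat \<Rightarrow> real" where
  "layer_volume v k = (\<Sum>w\<in>layer v k. real (degree V E w))"

lemma finite_layer: "finite (layer v k)"
  using finite_V by (simp add: layer_def)

lemma layer_0: "v \<in> V \<Longrightarrow> layer v 0 = {v}"
  using gdist_eq_0_iff[of v] by (auto simp: layer_def)

lemma sum_over_layers:
  assumes "\<And>w. w \<in> V \<Longrightarrow> gdist E v w \<le> n"
  shows "(\<Sum>w\<in>V. h w) = (\<Sum>k\<le>n. \<Sum>w\<in>layer v k. h w)"
proof -
  have "gdist E v ` V \<subseteq> {..n}" using assms by auto
  then show ?thesis unfolding layer_def using sum.group[OF finite_V finite_atMost, of "gdist E v" n h] by simp
qed

lemma min_degree_vertex:
  obtains v where "v \<in> V" "\<And>u. u \<in> V \<Longrightarrow> degree V E v \<le> degree V E u"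
proof -
  have "Min (degree V E ` V) \<in> degree V E ` V"
    using finite_V V_nonempty by (intro Min_in) auto
  then obtain v where "v \<in> V" "degree V E v = Min (degree V E ` V)" by auto
  then show thesis using that finite_V by simp
qed

lemma degree_pos_if_V_not_singleton:
  assumes v: "v \<in> V" and "V \<noteq> {v}"
  shows "0 < degree V E v"
proof -
  obtain u where u: "u \<in> V" "u \<noteq> v" using assms V_nonempty by blast
  then obtain j where "gdist E u v = Suc j"
    using gdist_eq_0_iff[OF u(1) v] by (cases "gdist E u v") auto
  then obtain y where "E v y" using gdist_SucE[OF u(1) v] by blast
  then show ?thesis by (rule degree_pos)
qed

text \<open>Both sides count the edges between consecutive layers.\<close>
lemma sum_up_degree_layer:
  "(\<Sum>u\<in>layer v k. real (up_degree v u)) = (\<Sum>w\<in>layer v (Suc k). real (down_degree v w))"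
proof -
  have up: "real (up_degree v u) = (\<Sum>w\<in>layer v (Suc k). if E u w then 1 else 0)" if "u \<in> layer v k" for u
  proof -
    have "{a \<in> V. E u a \<and> gdist E v a = gdist E v u + 1} = {a \<in> layer v (Suc k). E u a}"
      using that by (auto simp: layer_def)
    then show ?thesis unfolding up_degree_def by (simp add: sum.inter_filter[OF finite_layer, symmetric])
  qed
  have down: "real (down_degree v w) = (\<Sum>u\<in>layer v k. if E u w then 1 else 0)" if "w \<in> layer v (Suc k)" for w
  proof -
    have "{a \<in> V. E w a \<and> gdist E v a + 1 = gdist E v w} = {a \<in> layer v k. E a w}"
      using that by (auto simp: layer_def intro: adj_sym)
    then show ?thesis unfolding down_degree_def by (simp add: sum.inter_filter[OF finite_layer, symmetric])
  qed
  show ?thesis by (simp add: up down sum.swap[of _ "layer v k"])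
qed

end

locale curvature_bounded_graph = C3_C5_free_graph +
  fixes \<kappa> :: real
  assumes kappa_pos: "0 < \<kappa>" and kappa_le: "\<And>x y. E x y \<Longrightarrow> \<kappa> \<le> kappa_LLY V E x y"
begin

lemma down_degree_ge:
  assumes v: "v \<in> V"
  shows "w \<in> V \<Longrightarrow> real (gdist E v w) * \<kappa> / 2 * real (degree V E w) \<le> real (down_degree v w)"
proof (induction "gdist E v w" arbitrary: w)
  case (Suc j)
  obtain y where wy: "E w y" and dist_y: "gdist E v y = j"
    using gdist_SucE[OF v Suc.prems Suc.hyps(2)[symmetric]] .
  have IH: "real j * \<kappa> / 2 * real (degree V E y) \<le> real (down_degree v y)"
    using Suc.hyps(1)[OF dist_y[symmetric] adj_in_V(2)[OF wy]] dist_y by simp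
  have deg: "0 < real (degree V E w)" "0 < real (degree V E y)"
    using degree_pos[OF wy] degree_pos[OF adj_sym[OF wy]] by auto
  have "real j * \<kappa> / 2 \<le> real (down_degree v y) / real (degree V E y)"
    using IH deg by (simp add: le_divide_eq)
  moreover have "\<kappa> \<le> 2 * real (down_degree v w) / real (degree V E w) - 2 * real (down_degree v y) / real (degree V E y)"
    using kappa_le[OF wy] kappa_LLY_le_down_degree[OF v wy Suc.hyps(2)[symmetric] dist_y] by linarith
  ultimately have "real (Suc j) * \<kappa> / 2 \<le> real (down_degree v w) / real (degree V E w)"
    by (simp add: algebra_simps)
  then show ?case using deg Suc.hyps(2) by (simp add: le_divide_eq)
qed simp

lemma gdist_le_two_div_kappa:
  assumes v: "v \<in> V" and w: "w \<in> V"
  shows "real (gdist E v w) \<le> 2 / \<kappa>"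
proof (cases "gdist E v w")
  case (Suc j)
  then obtain y where wy: "E w y" using gdist_SucE[OF v w] by blast
  have "real (gdist E v w) * \<kappa> / 2 * real (degree V E w) \<le> real (degree V E w)"
    using down_degree_ge[OF v w] down_up_degree_le[of v w] by simp
  then have "real (gdist E v w) * \<kappa> / 2 \<le> 1"
    using degree_pos[OF wy] by (simp add: mult_le_cancel_right1)
  then show ?thesis using kappa_pos by (simp add: field_simps)
qed (use kappa_pos in simp)

lemma gdist_le_floor: "v \<in> V \<Longrightarrow> w \<in> V \<Longrightarrow> gdist E v w \<le> nat \<lfloor>2 / \<kappa>\<rfloor>"
  using gdist_le_two_div_kappa by (simp add: le_nat_floor)

lemma layer_volume_Suc_le:
  assumes v: "v \<in> V"
  shows "real (Suc k) * layer_volume v (Suc k) \<le> (2 / \<kappa> - real k) * layer_volume v k"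
proof -
  have "real (Suc k) * \<kappa> / 2 * layer_volume v (Suc k)
      = (\<Sum>w\<in>layer v (Suc k). real (Suc k) * \<kappa> / 2 * real (degree V E w))"
    unfolding layer_volume_def by (simp add: sum_distrib_left)
  also have "\<dots> \<le> (\<Sum>w\<in>layer v (Suc k). real (down_degree v w))"
  proof (intro sum_mono)
    fix w assume "w \<in> layer v (Suc k)"
    then show "real (Suc k) * \<kappa> / 2 * real (degree V E w) \<le> real (down_degree v w)"
      using down_degree_ge[OF v, of w] by (simp add: layer_def)
  qed
  also have "\<dots> = (\<Sum>u\<in>layer v k. real (up_degree v u))"
    by (rule sum_up_degree_layer[symmetric])
  also have "\<dots> \<le> (\<Sum>u\<in>layer v k. (1 - real k * \<kappa> / 2) * real (degree V E u))"
  proof (intro sum_mono)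
    fix u assume u: "u \<in> layer v k"
    then show "real (up_degree v u) \<le> (1 - real k * \<kappa> / 2) * real (degree V E u)"
      using down_degree_ge[OF v, of u] down_up_degree_le[of v u]
      by (auto simp: layer_def algebra_simps simp flip: of_nat_add)
  qed
  also have "\<dots> = (1 - real k * \<kappa> / 2) * layer_volume v k"
    unfolding layer_volume_def by (simp add: sum_distrib_left)
  finally have "real (Suc k) * \<kappa> / 2 * layer_volume v (Suc k) \<le> (1 - real k * \<kappa> / 2) * layer_volume v k" .
  then have "2 / \<kappa> * (real (Suc k) * \<kappa> / 2 * layer_volume v (Suc k))
      \<le> 2 / \<kappa> * ((1 - real k * \<kappa> / 2) * layer_volume v k)"
    using kappa_pos by (intro mult_left_mono) auto
  moreover have "2 / \<kappa> * (real (Suc k) * \<kappa> / 2 * layer_volume v (Suc k)) = real (Suc k) * layer_volume v (Suc k)"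
    using kappa_pos by simp
  moreover have "2 / \<kappa> * ((1 - real k * \<kappa> / 2) * layer_volume v k) = (2 / \<kappa> - real k) * layer_volume v k"
    using kappa_pos by (simp add: field_simps)
  ultimately show ?thesis by simp
qed

lemma layer_volume_le:
  assumes v: "v \<in> V"
  shows "real k \<le> 2 / \<kappa> \<Longrightarrow> layer_volume v k \<le> ((2 / \<kappa>) gchoose k) * real (degree V E v)"
proof (induction k)
  case 0
  then show ?case using layer_0[OF v] by (simp add: layer_volume_def)
next
  case (Suc k)
  have "real (Suc k) * layer_volume v (Suc k) \<le> (2 / \<kappa> - real k) * layer_volume v k"
    by (rule layer_volume_Suc_le[OF v])
  also have "\<dots> \<le> (2 / \<kappa> - real k) * (((2 / \<kappa>) gchoose k) * real (degree V E v))"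
    using Suc by (intro mult_left_mono) auto
  also have "\<dots> = real (Suc k) * (((2 / \<kappa>) gchoose Suc k) * real (degree V E v))"
    by (simp only: Suc_times_gbinomial_Suc mult.assoc[symmetric])
  finally show ?case by (simp del: of_nat_Suc)
qed

lemma sum_degree_le:
  assumes v: "v \<in> V"
  shows "(\<Sum>w\<in>V. real (degree V E w)) \<le> gbinomial_floor_sum (2 / \<kappa>) * real (degree V E v)"
proof -
  have "(\<Sum>w\<in>V. real (degree V E w)) = (\<Sum>k\<le>nat \<lfloor>2 / \<kappa>\<rfloor>. layer_volume v k)"
    unfolding layer_volume_def using gdist_le_floor[OF v] by (rule sum_over_layers)
  also have "\<dots> \<le> (\<Sum>k\<le>nat \<lfloor>2 / \<kappa>\<rfloor>. ((2 / \<kappa>) gchoose k) * real (degree V E v))"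
    using kappa_pos by (intro sum_mono layer_volume_le[OF v]) (simp add: le_nat_iff le_floor_iff)
  finally show ?thesis by (simp add: gbinomial_floor_sum_def sum_distrib_right)
qed

lemma card_le_gbinomial_floor_sum: "real (card V) \<le> gbinomial_floor_sum (2 / \<kappa>)"
proof -
  obtain v where v: "v \<in> V" and min: "\<And>u. u \<in> V \<Longrightarrow> degree V E v \<le> degree V E u"
    using min_degree_vertex by blast
  show ?thesis
  proof (cases "V = {v}")
    case True
    then show ?thesis using gbinomial_floor_sum_ge_1 kappa_pos by simp
  next
    case False
    have "real (card V) * real (degree V E v) = (\<Sum>w\<in>V. real (degree V E v))" by simp
    also have "\<dots> \<le> (\<Sum>w\<in>V. real (degree V E w))" using min by (intro sum_mono) simp
    also have "\<dots> \<le> gbinomial_floor_sum (2 / \<kappa>) * real (degree V E v)" by (rule sum_degree_le[OF v])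
    finally show ?thesis using degree_pos_if_V_not_singleton[OF v False] by simp
  qed
qed

lemma card_le_two_powr: "real (card V) \<le> 2 powr (2 / \<kappa>)"
  using card_le_gbinomial_floor_sum gbinomial_floor_sum_le_two_powr[of "2 / \<kappa>"] kappa_pos by simp

end

section \<open>The equality case\<close>

locale extremal_graph = curvature_bounded_graph +
  fixes m :: nat
  assumes two_div_kappa: "2 / \<kappa> = real m" and card_V: "card V = 2 ^ m"
begin

lemma m_pos: "0 < m"
  using two_div_kappa kappa_pos by (auto intro: Nat.gr0I)

lemma V_not_singleton: "V \<noteq> {v}"
proof
  assume "V = {v}"
  then have "2 ^ m = (1::nat)" using card_V by simp
  then show False using m_pos by simp
qed

lemma degree_eq_degree:
  assumes "u \<in> V" "w \<in> V"
  shows "degree V E u = degree V E w"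
proof -
  obtain v where v: "v \<in> V" and min: "\<And>u. u \<in> V \<Longrightarrow> degree V E v \<le> degree V E u"
    using min_degree_vertex by blast
  have "(\<Sum>w\<in>V. real (degree V E w)) \<le> (\<Sum>w\<in>V. real (degree V E v))"
    using sum_degree_le[OF v] by (simp add: two_div_kappa gbinomial_floor_sum_of_nat card_V)
  moreover have "(\<Sum>w\<in>V. real (degree V E v)) \<le> (\<Sum>w\<in>V. real (degree V E w))"
    using min by (intro sum_mono) simp
  ultimately have "(\<Sum>w\<in>V. real (degree V E v)) = (\<Sum>w\<in>V. real (degree V E w))" by linarith
  from sum_mono_inv[OF this] have "degree V E x = degree V E v" if "x \<in> V" for x
    using min that finite_V by fastforce
  then show ?thesis using assms by simp
qed

lemma gdist_le_m: "v \<in> V \<Longrightarrow> w \<in> V \<Longrightarrow> gdist E v w \<le> m"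
  using gdist_le_two_div_kappa two_div_kappa by fastforce

lemma card_layer:
  assumes v: "v \<in> V" and k: "k \<le> m"
  shows "card (layer v k) = m choose k"
proof -
  have deg: "0 < real (degree V E v)" using degree_pos_if_V_not_singleton[OF v V_not_singleton] by simp
  have le: "real (card (layer v k)) \<le> real (m choose k)" if "k \<le> m" for k
  proof -
    have "layer_volume v k = (\<Sum>w\<in>layer v k. real (degree V E v))"
      unfolding layer_volume_def
    proof (rule sum.cong)
      fix w assume "w \<in> layer v k"
      then show "real (degree V E w) = real (degree V E v)" using degree_eq_degree[of w v] v by (simp add: layer_def)
    qed simp
    moreover have "layer_volume v k \<le> real (m choose k) * real (degree V E v)"
      using layer_volume_le[OF v, of k] that by (simp add: two_div_kappa binomial_gbinomial)
    ultimately show ?thesis using deg by (simp add: mult.commute)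
  qed
  have "(\<Sum>k\<le>m. real (card (layer v k))) = real (card V)"
    using sum_over_layers[of v m "\<lambda>_. 1::real", OF gdist_le_m[OF v]] by simp
  also have "\<dots> = (\<Sum>k\<le>m. real (m choose k))"
    by (simp add: card_V choose_row_sum flip: of_nat_sum)
  finally have "real (card (layer v k)) = real (m choose k)"
    by (rule sum_mono_inv) (use le k in auto)
  then show ?thesis by simp
qed

lemma degree_eq: "v \<in> V \<Longrightarrow> degree V E v = m"
proof -
  assume v: "v \<in> V"
  have "layer v 1 = nbr v"
    using v gdist_adj gdist_eq_1_imp_adj[OF v] by (auto simp: layer_def nbr_def dest: adj_in_V(2))
  then show ?thesis using card_layer[OF v, of 1] m_pos by (simp add: degree_eq_card_nbr)
qed

lemma kappa_mult_m: "\<kappa> * real m = 2"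
  using two_div_kappa kappa_pos by (simp add: field_simps)

lemma gdist_le_down_degree:
  assumes v: "v \<in> V" and w: "w \<in> V"
  shows "gdist E v w \<le> down_degree v w"
proof -
  have "real (gdist E v w) = real (gdist E v w) * (\<kappa> * real m) / 2"
    by (simp add: kappa_mult_m)
  also have "\<dots> \<le> real (down_degree v w)"
    using down_degree_ge[OF v w] degree_eq[OF w] by (simp add: mult_ac)
  finally show ?thesis by simp
qed

text \<open>The inequalities behind the layer counts are tight: double counting the edges between
  layers \<open>k\<close> and \<open>k + 1\<close> gives \<open>(k + 1) \<cdot> (m choose (k + 1)) = (m - k) \<cdot> (m choose k)\<close>.\<close>
lemma layer_degrees:
  assumes v: "v \<in> V" and k: "k < m"
  shows "w \<in> layer v (Suc k) \<Longrightarrow> down_degree v w = Suc k"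
    and "u \<in> layer v k \<Longrightarrow> up_degree v u = m - k"
proof -
  have down_ge: "real (Suc k) \<le> real (down_degree v x)" if "x \<in> layer v (Suc k)" for x
    using gdist_le_down_degree[OF v, of x] that by (simp add: layer_def)
  have up_le: "real (up_degree v x) \<le> real (m - k)" if "x \<in> layer v k" for x
    using gdist_le_down_degree[OF v, of x] down_up_degree_le[of v x] degree_eq[of x] that
    by (simp add: layer_def)
  have "(\<Sum>x\<in>layer v (Suc k). real (Suc k)) = real (Suc k) * real (m choose Suc k)"
    using card_layer[OF v, of "Suc k"] k by simp
  also have "\<dots> = (\<Sum>x\<in>layer v k. real (m - k))"
    using card_layer[OF v, of k] k Suc_times_gbinomial_Suc[of k "real m"] by (simp add: binomial_gbinomial of_nat_diff)
  finally have count: "(\<Sum>x\<in>layer v (Suc k). real (Suc k)) = (\<Sum>x\<in>layer v k. real (m - k))" .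
  have "(\<Sum>x\<in>layer v (Suc k). real (down_degree v x)) = (\<Sum>x\<in>layer v k. real (up_degree v x))"
    by (rule sum_up_degree_layer[symmetric])
  moreover have "(\<Sum>x\<in>layer v (Suc k). real (Suc k)) \<le> (\<Sum>x\<in>layer v (Suc k). real (down_degree v x))"
    using down_ge by (rule sum_mono)
  moreover have "(\<Sum>x\<in>layer v k. real (up_degree v x)) \<le> (\<Sum>x\<in>layer v k. real (m - k))"
    using up_le by (rule sum_mono)
  ultimately have "(\<Sum>x\<in>layer v (Suc k). real (Suc k)) = (\<Sum>x\<in>layer v (Suc k). real (down_degree v x))"
    and "(\<Sum>x\<in>layer v k. real (up_degree v x)) = (\<Sum>x\<in>layer v k. real (m - k))"
    using count by linarith+
  from sum_mono_inv[OF this(1) down_ge _ finite_layer] sum_mono_inv[OF this(2) up_le _ finite_layer]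
  show "w \<in> layer v (Suc k) \<Longrightarrow> down_degree v w = Suc k" and "u \<in> layer v k \<Longrightarrow> up_degree v u = m - k"
    by (metis of_nat_eq_iff)+
qed

lemma down_degree_eq_gdist:
  assumes "v \<in> V" "w \<in> V"
  shows "down_degree v w = gdist E v w"
proof (cases "gdist E v w")
  case 0
  then show ?thesis using assms gdist_eq_0_iff by (simp add: down_degree_def)
next
  case (Suc k)
  then show ?thesis using layer_degrees(1)[OF assms(1), of k w] gdist_le_m[OF assms] assms(2)
    by (simp add: layer_def)
qed

lemma down_up_degree_eq:
  assumes "v \<in> V" "w \<in> V"
  shows "down_degree v w + up_degree v w = m"
proof (cases "gdist E v w < m")
  case True
  then show ?thesis using layer_degrees(2)[OF assms(1) True, of w] down_degree_eq_gdist[OF assms] assms(2)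
    by (simp add: layer_def)
next
  case False
  then show ?thesis
    using down_up_degree_le[of v w] degree_eq[OF assms(2)] down_degree_eq_gdist[OF assms] gdist_le_m[OF assms]
    by simp
qed

end

section \<open>Hypercube coordinates\<close>

lemma card_hypercube_nbrs_le:
  assumes S: "S \<subseteq> {1..d}"
  shows "card {T \<in> Pow {1..d}. hypercube_adj S T} \<le> d"
proof -
  define flip where "flip i = (if i \<in> S then S - {i} else insert i S)" for i :: nat
  have "{T \<in> Pow {1..d}. hypercube_adj S T} \<subseteq> flip ` {1..d}"
  proof
    fix T assume T: "T \<in> {T \<in> Pow {1..d}. hypercube_adj S T}"
    then have "card ((S - T) \<union> (T - S)) = 1" by (simp add: hypercube_adj_def)
    then obtain i where i: "(S - T) \<union> (T - S) = {i}" by (rule card_1_singletonE)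
    then have "i \<in> {1..d}" using S T by blast
    moreover have "T = flip i"
    proof (rule set_eqI)
      fix z
      have "z \<in> (S - T) \<union> (T - S) \<longleftrightarrow> z = i" using i by simp
      then show "z \<in> T \<longleftrightarrow> z \<in> flip i" by (cases "i \<in> S") (auto simp: flip_def)
    qed
    ultimately show "T \<in> flip ` {1..d}" by blast
  qed
  then have "card {T \<in> Pow {1..d}. hypercube_adj S T} \<le> card (flip ` {1..d})"
    by (intro card_mono) auto
  also have "\<dots> \<le> d" using card_image_le[of "{1..d}" flip] by simp
  finally show ?thesis .
qed

lemma card_eq_if_iso_hypercube: "iso_hypercube V E d \<Longrightarrow> card V = 2 ^ d"
  by (auto simp: iso_hypercube_def card_Pow dest!: bij_betw_same_card)

context extremal_graph
begin

lemma adj_gdist_cases: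
  assumes v: "v \<in> V" and wa: "E w a"
  shows "gdist E v a = gdist E v w + 1 \<or> gdist E v w = gdist E v a + 1"
proof -
  have w: "w \<in> V" using adj_in_V(1)[OF wa] .
  let ?D = "{a \<in> V. E w a \<and> gdist E v a + 1 = gdist E v w}"
  let ?U = "{a \<in> V. E w a \<and> gdist E v a = gdist E v w + 1}"
  have "card (?D \<union> ?U) = card ?D + card ?U" using finite_V by (intro card_Un_disjoint) auto
  also have "\<dots> = card (nbr w)"
    using down_up_degree_eq[OF v w] degree_eq[OF w] by (simp add: down_degree_def up_degree_def degree_eq_card_nbr)
  finally have "card (?D \<union> ?U) = card (nbr w)" .
  then have "?D \<union> ?U = nbr w" using finite_nbr by (intro card_subset_eq) (auto simp: nbr_def)
  then have "a \<in> ?D \<union> ?U" using wa adj_in_V(2)[OF wa] by (simp add: nbr_def)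
  then show ?thesis by auto
qed

lemma card_common_nbrs:
  assumes "p \<in> V" "q \<in> V" "gdist E q p = 2"
  shows "card {a \<in> V. E p a \<and> E q a} = 2"
proof -
  have "{a \<in> V. E p a \<and> E q a} = {a \<in> V. E p a \<and> gdist E q a + 1 = gdist E q p}"
    using assms gdist_adj gdist_eq_1_imp_adj[OF assms(2)] by auto
  then show ?thesis using down_degree_eq_gdist[OF assms(2,1)] assms(3) by (simp add: down_degree_def)
qed

definition base :: 'a where
  "base = (SOME v. v \<in> V)"

definition base_nbr :: "nat \<Rightarrow> 'a" where
  "base_nbr = (SOME h. bij_betw h {1..m} (nbr base))"

text \<open>Coordinate \<open>i\<close> of \<open>w\<close> is set iff some shortest path from the base vertex to \<open>w\<close>
  starts with the edge to its \<open>i\<close>-th neighbour.\<close>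
definition coords :: "'a \<Rightarrow> nat set" where
  "coords w = {i \<in> {1..m}. gdist E (base_nbr i) w + 1 = gdist E base w}"

abbreviation level :: "'a \<Rightarrow> nat" where
  "level w \<equiv> gdist E base w"

lemma base_in_V: "base \<in> V"
  unfolding base_def using V_nonempty by (simp add: some_in_eq)

lemma bij_base_nbr: "bij_betw base_nbr {1..m} (nbr base)"
proof -
  have "card {1..m} = card (nbr base)" using degree_eq[OF base_in_V] by (simp add: degree_eq_card_nbr)
  then have "\<exists>h. bij_betw h {1..m} (nbr base)" using finite_nbr by (intro finite_same_card_bij) auto
  then show ?thesis unfolding base_nbr_def by (rule someI_ex)
qed

lemma base_nbr_adj: "i \<in> {1..m} \<Longrightarrow> E base (base_nbr i)"
  using bij_base_nbr by (auto simp: bij_betw_def nbr_def)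

lemma coords_subset: "coords w \<subseteq> {1..m}"
  by (auto simp: coords_def)

lemma finite_coords: "finite (coords w)"
  using coords_subset finite_subset by blast

lemma card_coords:
  assumes w: "w \<in> V"
  shows "card (coords w) = level w"
proof -
  have "base_nbr ` coords w = {a \<in> V. E base a \<and> gdist E w a + 1 = gdist E w base}"
  proof
    show "base_nbr ` coords w \<subseteq> {a \<in> V. E base a \<and> gdist E w a + 1 = gdist E w base}"
      using base_nbr_adj adj_in_V(2) by (auto simp: coords_def gdist_sym)
  next
    show "{a \<in> V. E base a \<and> gdist E w a + 1 = gdist E w base} \<subseteq> base_nbr ` coords w"
    proof
      fix a assume a: "a \<in> {a \<in> V. E base a \<and> gdist E w a + 1 = gdist E w base}"
      then have "a \<in> base_nbr ` {1..m}" using bij_base_nbr by (simp add: bij_betw_def nbr_def)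
      then obtain i where "i \<in> {1..m}" "a = base_nbr i" by blast
      then show "a \<in> base_nbr ` coords w" using a by (auto simp: coords_def gdist_sym)
    qed
  qed
  moreover have "inj_on base_nbr (coords w)"
    using bij_base_nbr coords_subset by (auto simp: bij_betw_def intro: inj_on_subset)
  ultimately have "card (coords w) = down_degree w base"
    by (simp add: down_degree_def card_image[symmetric])
  also have "\<dots> = level w" using down_degree_eq_gdist[OF w base_in_V] gdist_sym by simp
  finally show ?thesis .
qed

lemma coords_mono:
  assumes e: "E w w'" and up: "level w' = level w + 1"
  shows "coords w \<subseteq> coords w'"
proof
  fix i assume i: "i \<in> coords w"
  then have i1m: "i \<in> {1..m}" and "gdist E (base_nbr i) w + 1 = level w" by (auto simp: coords_def)
  moreover have "gdist E (base_nbr i) w' \<le> gdist E (base_nbr i) w + 1"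
    using gdist_adj_le[OF e adj_in_V(2)[OF base_nbr_adj[OF i1m]]] .
  moreover have "level w' \<le> 1 + gdist E (base_nbr i) w'"
    using gdist_triangle[OF base_in_V adj_in_V(2)[OF base_nbr_adj[OF i1m]] adj_in_V(2)[OF e]]
      gdist_adj[OF base_nbr_adj[OF i1m]] by simp
  ultimately show "i \<in> coords w'" using up by (simp add: coords_def)
qed

lemma coords_up_edge:
  assumes e: "E w w'" and up: "level w' = level w + 1"
  shows "coords w \<subseteq> coords w'" "card (coords w' - coords w) = 1"
  using coords_mono[OF assms] card_coords adj_in_V[OF e] up finite_coords
  by (simp_all add: card_Diff_subset)

lemma hypercube_adj_coords:
  assumes e: "E w w'"
  shows "hypercube_adj (coords w) (coords w')"
  using adj_gdist_cases[OF base_in_V e] coords_up_edge[OF e] coords_up_edge[OF adj_sym[OF e]]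
  by (auto simp: hypercube_adj_def Un_absorb1 Un_absorb2 Diff_eq_empty_iff[THEN iffD2])

lemma coords_removeE:
  assumes inj: "\<And>r r'. r \<in> V \<Longrightarrow> r' \<in> V \<Longrightarrow> level r + 1 = level p \<Longrightarrow> coords r = coords r' \<Longrightarrow> r = r'"
    and p: "p \<in> V" and i: "i \<in> coords p"
  obtains r where "E p r" "level r + 1 = level p" "coords r = coords p - {i}"
proof -
  define P where "P = {r \<in> V. E p r \<and> level r + 1 = level p}"
  define Q where "Q = (\<lambda>i. coords p - {i}) ` coords p"
  have "coords ` P \<subseteq> Q"
  proof
    fix T assume "T \<in> coords ` P"
    then obtain r where r: "r \<in> P" "T = coords r" by auto
    then have rp: "E r p" "level p = level r + 1" using adj_sym by (auto simp: P_def)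
    obtain i' where "coords p - coords r = {i'}"
      using coords_up_edge(2)[OF rp] by (rule card_1_singletonE)
    then have "i' \<in> coords p" "coords r = coords p - {i'}"
      using coords_up_edge(1)[OF rp] by auto
    then show "T \<in> Q" using r by (auto simp: Q_def)
  qed
  moreover have "card (coords ` P) = card Q"
  proof -
    have "inj_on coords P" by (rule inj_onI) (use inj in \<open>auto simp: P_def\<close>)
    then have "card (coords ` P) = level p"
      using down_degree_eq_gdist[OF base_in_V p] by (simp add: card_image down_degree_def P_def)
    moreover have "inj_on (\<lambda>i. coords p - {i}) (coords p)" by (rule inj_onI) auto
    then have "card Q = level p" using card_coords[OF p] by (simp add: Q_def card_image)
    ultimately show ?thesis by simp
  qed
  ultimately have "coords ` P = Q" by (intro card_subset_eq) (auto simp: Q_def finite_coords)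
  moreover have "coords p - {i} \<in> Q" using i by (auto simp: Q_def)
  ultimately obtain r where "r \<in> P" "coords r = coords p - {i}" by auto
  then show thesis using that by (auto simp: P_def)
qed

lemma coords_inj_level_le_1:
  assumes w: "w \<in> V" and w': "w' \<in> V" and "level w \<le> 1" and eq: "coords w = coords w'"
  shows "w = w'"
proof -
  have levels: "level w' = level w" using card_coords[OF w] card_coords[OF w'] eq by simp
  show ?thesis
  proof (cases "level w = 0")
    case True
    then show ?thesis using levels gdist_eq_0_iff[OF base_in_V] w w' by simp
  next
    case False
    then have level_1: "level w = 1" "level w' = 1" using \<open>level w \<le> 1\<close> levels by auto
    then have "card (coords w) = 1" using card_coords[OF w] by simp
    then obtain i where i: "coords w = {i}" by (rule card_1_singletonE)
    have "x = base_nbr i" if "x \<in> V" "level x = 1" "i \<in> coords x" for x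
      using that gdist_eq_0_iff[OF adj_in_V(2)[OF base_nbr_adj] that(1)] by (auto simp: coords_def)
    then have "w = base_nbr i" "w' = base_nbr i" using i eq level_1 w w' by auto
    then show ?thesis by simp
  qed
qed

text \<open>Two vertices on level \<open>j \<ge> 2\<close> with the same coordinates would, after removing two of the
  coordinates in either order, be common neighbours of two vertices at distance 2, together with
  a third common neighbour one level further down.\<close>
lemma coords_inj_step:
  assumes IH: "\<And>r r'. r \<in> V \<Longrightarrow> r' \<in> V \<Longrightarrow> level r < j \<Longrightarrow> coords r = coords r' \<Longrightarrow> r = r'"
    and j: "2 \<le> j" and w: "w \<in> V" and w': "w' \<in> V" and lw: "level w = j" and eq: "coords w = coords w'"
  shows "w = w'"
proof (rule ccontr)
  assume ne: "w \<noteq> w'"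
  have lw': "level w' = j" using card_coords[OF w] card_coords[OF w'] eq lw by simp
  obtain i1 B where "coords w = insert i1 B" "i1 \<notin> B" "1 \<le> card B"
    using card_le_Suc_iff[of 1 "coords w"] card_coords[OF w] lw j by auto
  moreover obtain i2 where "i2 \<in> B" using \<open>1 \<le> card B\<close> by fastforce
  ultimately have i12: "i1 \<in> coords w" "i2 \<in> coords w" "i1 \<noteq> i2" by auto
  have remove: "\<exists>r. E x r \<and> level r + 1 = level x \<and> coords r = coords x - {i}"
    if x: "x \<in> V" "level x \<le> j" and i: "i \<in> coords x" for x i
  proof -
    have "r = r'" if "r \<in> V" "r' \<in> V" "level r + 1 = level x" "coords r = coords r'" for r r'
      using IH[OF that(1,2) _ that(4)] that(3) x(2) by simp
    from coords_removeE[OF this x(1) i] show ?thesis by blast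
  qed
  obtain p where p: "E w p" "level p + 1 = j" "coords p = coords w - {i1}"
    using remove[OF w _ i12(1)] lw by auto
  obtain p' where p': "E w' p'" "level p' + 1 = j" "coords p' = coords w - {i1}"
    using remove[OF w', of i1] lw' eq i12(1) by auto
  obtain q where q: "E w q" "level q + 1 = j" "coords q = coords w - {i2}"
    using remove[OF w _ i12(2)] lw by auto
  obtain q' where q': "E w' q'" "level q' + 1 = j" "coords q' = coords w - {i2}"
    using remove[OF w', of i2] lw' eq i12(2) by auto
  have pV: "p \<in> V" and qV: "q \<in> V" using adj_in_V(2) p(1) q(1) by auto
  have "p' = p" using IH[of p' p] adj_in_V(2)[OF p'(1)] pV p(2,3) p'(2,3) by simp
  have "q' = q" using IH[of q' q] adj_in_V(2)[OF q'(1)] qV q(2,3) q'(2,3) by simp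
  have "p \<noteq> q" using p(3) q(3) i12 by auto
  obtain r where r: "E p r" "level r + 1 = level p" "coords r = coords p - {i2}"
    using remove[OF pV, of i2] p(2,3) i12 j by auto
  obtain r' where r': "E q r'" "level r' + 1 = level q" "coords r' = coords q - {i1}"
    using remove[OF qV, of i1] q(2,3) i12 j by auto
  have "coords r' = coords r" using p(3) q(3) r(3) r'(3) by auto
  then have "r' = r" using IH[of r' r] adj_in_V(2)[OF r(1)] adj_in_V(2)[OF r'(1)] r'(2) q(2) by simp
  have "\<not> E q p" using adj_gdist_cases[OF base_in_V, of q p] p(2) q(2) by auto
  moreover have "gdist E q p \<le> 2"
    using gdist_le[of q p 2] adj_sym[OF q(1)] p(1) by (auto simp: numeral_2_eq_2 has_walk_Suc)
  ultimately have "gdist E q p = 2" using gdist_ge_2[OF qV pV] \<open>p \<noteq> q\<close> by fastforce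
  then have "card {a \<in> V. E p a \<and> E q a} = 2" by (rule card_common_nbrs[OF pV qV])
  moreover have "E p w" "E q w" "E p w'" "E q w'" "E p r" "E q r"
    using adj_sym p(1) q(1) p'(1) q'(1) r(1) r'(1) \<open>p' = p\<close> \<open>q' = q\<close> \<open>r' = r\<close> by auto
  then have "{w, w', r} \<subseteq> {a \<in> V. E p a \<and> E q a}" using adj_in_V(2) by blast
  moreover have "r \<noteq> w" "r \<noteq> w'" using r(2) p(2) lw lw' by auto
  then have "card {w, w', r} = 3" using ne by simp
  ultimately show False using card_mono[of "{a \<in> V. E p a \<and> E q a}" "{w, w', r}"] finite_V by simp
qed

lemma inj_on_coords: "inj_on coords V"
proof -
  have "w = w'" if "w \<in> V" "w' \<in> V" "level w = j" "coords w = coords w'" for j w w'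
    using that
  proof (induction j arbitrary: w w' rule: less_induct)
    case (less j)
    show ?case
    proof (cases "j \<le> 1")
      case True
      then show ?thesis using coords_inj_level_le_1 less.prems by simp
    next
      case False
      then show ?thesis using coords_inj_step[OF _ _ less.prems] less.IH by simp
    qed
  qed
  then show ?thesis by (auto intro: inj_onI)
qed

lemma coords_image_nbr:
  assumes x: "x \<in> V"
  shows "coords ` nbr x = {T \<in> Pow {1..m}. hypercube_adj (coords x) T}"
proof (rule card_subset_eq)
  show "finite {T \<in> Pow {1..m}. hypercube_adj (coords x) T}" by simp
  show "coords ` nbr x \<subseteq> {T \<in> Pow {1..m}. hypercube_adj (coords x) T}"
    using hypercube_adj_coords coords_subset by (auto simp: nbr_def)
  have "card (coords ` nbr x) = m"
    using inj_on_subset[OF inj_on_coords] degree_eq[OF x]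
    by (auto simp: card_image degree_eq_card_nbr nbr_def)
  then show "card (coords ` nbr x) = card {T \<in> Pow {1..m}. hypercube_adj (coords x) T}"
    using card_hypercube_nbrs_le[OF coords_subset, of x]
      card_mono[OF _ \<open>coords ` nbr x \<subseteq> _\<close>] by simp
qed

lemma iso_hypercube: "iso_hypercube V E m"
  unfolding iso_hypercube_def
proof (intro exI conjI ballI)
  have "card (coords ` V) = card (Pow {1..m})"
    using inj_on_coords card_V by (simp add: card_image card_Pow)
  then have "coords ` V = Pow {1..m}" using coords_subset by (intro card_subset_eq) auto
  then show "bij_betw coords V (Pow {1..m})" using inj_on_coords by (simp add: bij_betw_def)
  fix x y assume x: "x \<in> V" and y: "y \<in> V"
  show "E x y \<longleftrightarrow> hypercube_adj (coords x) (coords y)"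
  proof
    assume "hypercube_adj (coords x) (coords y)"
    then have "coords y \<in> coords ` nbr x" using coords_image_nbr[OF x] coords_subset by auto
    then show "E x y" using inj_on_coords y by (auto simp: nbr_def inj_on_def)
  qed (rule hypercube_adj_coords)
qed

end

context curvature_bounded_graph
begin

lemma card_eq_two_powr_imp_iso_hypercube:
  assumes eq: "real (card V) = 2 powr (2 / \<kappa>)"
  shows "\<exists>d. 0 < d \<and> iso_hypercube V E d \<and> \<kappa> = 2 / real d"
proof -
  have nonneg: "0 \<le> 2 / \<kappa>" using kappa_pos by simp
  have "gbinomial_floor_sum (2 / \<kappa>) = 2 powr (2 / \<kappa>)"
    using card_le_gbinomial_floor_sum gbinomial_floor_sum_le_two_powr[OF nonneg] eq by linarith
  then have "2 / \<kappa> \<in> \<nat>" using gbinomial_floor_sum_eq_two_powr_iff[OF nonneg] by blast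
  then obtain m where m: "2 / \<kappa> = real m" by (rule Nats_cases)
  then have "real (card V) = real (2 ^ m)" using eq by (simp add: powr_realpow)
  then have "card V = 2 ^ m" by (simp only: of_nat_eq_iff)
  then interpret extremal_graph V E \<kappa> m
    using curvature_bounded_graph_axioms m by (simp add: extremal_graph_def extremal_graph_axioms_def)
  have "\<kappa> = 2 / real m" using kappa_mult_m m_pos by (simp add: field_simps)
  then show ?thesis using iso_hypercube m_pos by blast
qed

end

theorem theorem1p6:
  fixes V :: "'a set" and E :: "'a \<Rightarrow> 'a \<Rightarrow> bool" and \<kappa> :: real
  assumes "simple_graph V E" and "connected_graph V E"
    and "no_C3 E" and "no_C5 E"
    and "\<kappa> > 0"
    and "\<forall>x y. E x y \<longrightarrow> kappa_LLY V E x y \<ge> \<kappa>"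
  shows "real (card V) \<le> 2 powr (2 / \<kappa>)
    \<and> (real (card V) = 2 powr (2 / \<kappa>) \<longleftrightarrow>
         (\<exists>d::nat. d > 0 \<and> iso_hypercube V E d \<and> \<kappa> = 2 / real d))"
proof -
  interpret curvature_bounded_graph V E \<kappa>
    using assms by (simp add: curvature_bounded_graph_def curvature_bounded_graph_axioms_def
      C3_C5_free_graph_def C3_C5_free_graph_axioms_def connected_simple_graph_def)
  have "real (card V) = 2 powr (2 / \<kappa>)" if "\<exists>d. d > 0 \<and> iso_hypercube V E d \<and> \<kappa> = 2 / real d"
    using that card_eq_if_iso_hypercube by (auto simp: powr_realpow)
  then show ?thesis using card_le_two_powr card_eq_two_powr_imp_iso_hypercube by blast
qed

end
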